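(* Let $\mu>0$, $\beta_1,\beta_2,\gamma_1,\gamma_2>0$, $0<\sigma_{21}\le\sigma_{12}\le 1$, $\mathcal R_i=\beta_i/(\gamma_i+\mu)$, and suppose $(\mathcal R_1,\mathcal R_2)\in\Omega^\mu$. Let $S^*$ be the $S$-component of the unique feasible steady state of system (M) with $I_1^*>0$, $I_2^*>0$. Then, for $i=1,2$, $1-\mathcal R_iS^*>0$ and $A_i>0$, where $A_1=\mathcal R_1\gamma_2\sigma_{21}(1-S^* )-(\gamma_2+\mu)(1-\mathcal R_1S^* )$ and $A_2=\mathcal R_2\gamma_1\sigma_{12}(1-S^* )-(\gamma_1+\mu)(1-\mathcal R_2S^* )$.
   Context: System (M) is the two-strain epidemic model for $(S,I_1,I_2,J_1,J_2,R_1,R_2,R_3)$ (the letters $R_1,R_2,R_3$ denote compartments, while $\mathcal R_1,\mathcal R_2$ denote numbers): $S'=\mu-\beta_1(I_1+J_1)S-\beta_2(I_2+J_2)S-\mu S$, $I_1'=\beta_1S(I_1+J_1)-(\mu+\gamma_1)I_1$, $I_2'=\beta_2S(I_2+J_2)-(\mu+\gamma_2)I_2$, $J_1'=\beta_1\sigma_{21}R_2(I_1+J_1)-(\mu+\gamma_1)J_1$, $J_2'=\beta_2\sigma_{12}R_1(I_2+J_2)-(\mu+\gamma_2)J_2$, $R_1'=\gamma_1I_1-\beta_2\sigma_{12}(I_2+J_2)R_1-\mu R_1$, $R_2'=\gamma_2I_2-\beta_1\sigma_{21}(I_1+J_1)R_2-\mu R_2$, $R_3'=\gamma_1J_1+\gamma_2J_2-\mu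 R_3$. A steady state is a zero of the right-hand side; it is feasible if all components are nonnegative and sum to 1. For $\mu\ge 0$, $\Omega^\mu=\Omega^\mu_1\cap\Omega^\mu_2$ where, for $\{i,j\}=\{1,2\}$, $\Omega^\mu_i=\left\{(\mathcal R_1,\mathcal R_2):\ \mathcal R_i>1,\ \mathcal R_j>\dfrac{(\gamma_i+\mu)\mathcal R_i}{(1+\sigma_{ij}(\mathcal R_i-1))\gamma_i+\mu}\right\}$. (For such parameters a unique feasible steady state with $I_1^*>0,I_2^*>0$ exists.) *)

theory Defs
  imports Complex_Main
begin

definition steady_state_M ::
  "real \<Rightarrow> real \<Rightarrow> real \<Rightarrow> real \<Rightarrow> real \<Rightarrow> real \<Rightarrow> real \<Rightarrow>
   real \<Rightarrow> real \<Rightarrow> real \<Rightarrow> real \<Rightarrow> real \<Rightarrow> real \<Rightarrow> real \<Rightarrow> real \<Rightarrow> bool" where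
  "steady_state_M \<mu> \<beta>1 \<beta>2 \<gamma>1 \<gamma>2 \<sigma>12 \<sigma>21 S I1 I2 J1 J2 R1 R2 R3 \<longleftrightarrow>
     \<mu> - \<beta>1 * (I1 + J1) * S - \<beta>2 * (I2 + J2) * S - \<mu> * S = 0 \<and>
     \<beta>1 * S * (I1 + J1) - (\<mu> + \<gamma>1) * I1 = 0 \<and>
     \<beta>2 * S * (I2 + J2) - (\<mu> + \<gamma>2) * I2 = 0 \<and>
     \<beta>1 * \<sigma>21 * R2 * (I1 + J1) - (\<mu> + \<gamma>1) * J1 = 0 \<and>
     \<beta>2 * \<sigma>12 * R1 * (I2 + J2) - (\<mu> + \<gamma>2) * J2 = 0 \<and>
     \<gamma>1 * I1 - \<beta>2 * \<sigma>12 * (I2 + J2) * R1 - \<mu> * R1 = 0 \<and>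
     \<gamma>2 * I2 - \<beta>1 * \<sigma>21 * (I1 + J1) * R2 - \<mu> * R2 = 0 \<and>
     \<gamma>1 * J1 + \<gamma>2 * J2 - \<mu> * R3 = 0"

definition feasible_M ::
  "real \<Rightarrow> real \<Rightarrow> real \<Rightarrow> real \<Rightarrow> real \<Rightarrow> real \<Rightarrow> real \<Rightarrow> real \<Rightarrow> bool" where
  "feasible_M S I1 I2 J1 J2 R1 R2 R3 \<longleftrightarrow>
     S \<ge> 0 \<and> I1 \<ge> 0 \<and> I2 \<ge> 0 \<and> J1 \<ge> 0 \<and> J2 \<ge> 0 \<and> R1 \<ge> 0 \<and> R2 \<ge> 0 \<and> R3 \<ge> 0 \<and>
     S + I1 + I2 + J1 + J2 + R1 + R2 + R3 = 1"

definition Omega1 :: "real \<Rightarrow> real \<Rightarrow> real \<Rightarrow> real \<Rightarrow> (real \<times> real) set" where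
  "Omega1 \<mu> \<gamma>1 \<gamma>2 \<sigma>12 = {(Rn1, Rn2). Rn1 > 1 \<and>
     Rn2 > (\<gamma>1 + \<mu>) * Rn1 / ((1 + \<sigma>12 * (Rn1 - 1)) * \<gamma>1 + \<mu>)}"

definition Omega2 :: "real \<Rightarrow> real \<Rightarrow> real \<Rightarrow> real \<Rightarrow> (real \<times> real) set" where
  "Omega2 \<mu> \<gamma>1 \<gamma>2 \<sigma>21 = {(Rn1, Rn2). Rn2 > 1 \<and>
     Rn1 > (\<gamma>2 + \<mu>) * Rn2 / ((1 + \<sigma>21 * (Rn2 - 1)) * \<gamma>2 + \<mu>)}"

definition Omega :: "real \<Rightarrow> real \<Rightarrow> real \<Rightarrow> real \<Rightarrow> real \<Rightarrow> (real \<times> real) set" where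
  "Omega \<mu> \<gamma>1 \<gamma>2 \<sigma>12 \<sigma>21 = Omega1 \<mu> \<gamma>1 \<gamma>2 \<sigma>12 \<inter> Omega2 \<mu> \<gamma>1 \<gamma>2 \<sigma>21"

end

theory Submission
  imports Defs
begin

text \<open>At an endemic steady state each strain i is exactly at replacement:
  \<open>\<beta>\<^sub>i (S + \<sigma>\<^sub>j\<^sub>i R\<^sub>j) = \<gamma>\<^sub>i + \<mu>\<close>, i.e.
  \<open>1 - \<R>\<^sub>i S = \<R>\<^sub>i \<sigma>\<^sub>j\<^sub>i R\<^sub>j\<close>, which is positive because the compartment
  \<open>R\<^sub>j\<close> is fed by \<open>I\<^sub>j > 0\<close>. Substituting this into \<open>A\<^sub>i\<close> gives
  \<open>A\<^sub>i = \<R>\<^sub>i \<sigma>\<^sub>j\<^sub>i (\<gamma>\<^sub>j (1 - S) - (\<gamma>\<^sub>j + \<mu>) R\<^sub>j)\<close>, and the steady-state equation for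
  \<open>R\<^sub>j\<close> together with \<open>S + \<dots> + R\<^sub>3 = 1\<close> rewrites the bracket as a sum of nonnegative
  terms containing \<open>\<gamma>\<^sub>j I\<^sub>i > 0\<close>. The argument only uses the equations of
  one strain and the recovered class of the other, so it is applied once per strain;
  the hypothesis on \<open>\<Omega>\<^sup>\<mu>\<close> and the ordering of the \<open>\<sigma>\<close>'s are only needed for the
  existence of the steady state, not for these inequalities.\<close>

lemma replacement_at_endemic_state:
  fixes \<beta> \<sigma> \<mu> \<gamma> S I J R :: real
  assumes "\<beta> * S * (I + J) - (\<mu> + \<gamma>) * I = 0"
    and "\<beta> * \<sigma> * R * (I + J) - (\<mu> + \<gamma>) * J = 0"
    and "I + J > 0"
  shows "\<beta> * (S + \<sigma> * R) = \<gamma> + \<mu>"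
proof -
  have "(I + J) * (\<beta> * (S + \<sigma> * R)) = (I + J) * (\<gamma> + \<mu>)"
    using assms(1,2) by (simp add: algebra_simps)
  then show ?thesis using assms(3) by simp
qed

lemma recovered_pos_of_infected_pos:
  fixes \<gamma> \<mu> \<kappa> I R :: real
  assumes "\<gamma> * I - \<kappa> * R - \<mu> * R = 0"
    and "\<gamma> > 0" "I > 0" "\<kappa> \<ge> 0" "\<mu> > 0"
  shows "R > 0"
proof -
  have "R * (\<kappa> + \<mu>) = \<gamma> * I" using assms(1) by (simp add: algebra_simps)
  moreover have "\<gamma> * I > 0" "\<kappa> + \<mu> > 0" using assms(2-5) by simp_all
  ultimately show ?thesis by (metis zero_less_mult_pos2)
qed

lemma strain_threshold_inequalities:
  fixes \<mu> \<beta> \<gamma> \<gamma>' \<sigma> S I J I' R' :: real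
  assumes "\<mu> > 0" "\<beta> > 0" "\<gamma> > 0" "\<gamma>' > 0" "\<sigma> > 0"
    and infection: "\<beta> * S * (I + J) - (\<mu> + \<gamma>) * I = 0"
    and reinfection: "\<beta> * \<sigma> * R' * (I + J) - (\<mu> + \<gamma>) * J = 0"
    and recovery: "\<gamma>' * I' - \<beta> * \<sigma> * (I + J) * R' - \<mu> * R' = 0"
    and "I > 0" "J \<ge> 0" "I' > 0"
    and "S + I + I' + R' \<le> 1"
  shows "1 - \<beta> / (\<gamma> + \<mu>) * S > 0 \<and>
         \<beta> / (\<gamma> + \<mu>) * \<gamma>' * \<sigma> * (1 - S) - (\<gamma>' + \<mu>) * (1 - \<beta> / (\<gamma> + \<mu>) * S) > 0"
proof -
  define \<R> where "\<R> = \<beta> / (\<gamma> + \<mu>)"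
  have "\<R> > 0" using assms(1-3) by (simp add: \<R>_def)
  have infected: "I + J > 0" using \<open>I > 0\<close> \<open>J \<ge> 0\<close> by linarith
  have "\<beta> * (S + \<sigma> * R') = \<gamma> + \<mu>"
    using replacement_at_endemic_state[OF infection reinfection infected] .
  then have deficit: "1 - \<R> * S = \<R> * \<sigma> * R'"
    using assms(1,3) by (simp add: \<R>_def field_simps)
  have "R' > 0"
    using recovered_pos_of_infected_pos[of \<gamma>' I' "\<beta> * \<sigma> * (I + J)" R' \<mu>]
      recovery assms(1,2,4,5) \<open>I' > 0\<close> infected by simp
  have "\<gamma>' * (1 - S) - (\<gamma>' + \<mu>) * R' =
        \<gamma>' * (1 - S - I' - R') + \<beta> * \<sigma> * (I + J) * R'"
    using recovery by (simp add: algebra_simps)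
  moreover have "\<gamma>' * (1 - S - I' - R') > 0"
    using \<open>\<gamma>' > 0\<close> \<open>I > 0\<close> \<open>S + I + I' + R' \<le> 1\<close> by simp
  moreover have "\<beta> * \<sigma> * (I + J) * R' > 0"
    using assms(2,5) infected \<open>R' > 0\<close> by simp
  ultimately have bracket: "\<gamma>' * (1 - S) - (\<gamma>' + \<mu>) * R' > 0" by linarith
  have "\<R> * \<gamma>' * \<sigma> * (1 - S) - (\<gamma>' + \<mu>) * (1 - \<R> * S) =
        \<R> * \<sigma> * (\<gamma>' * (1 - S) - (\<gamma>' + \<mu>) * R')"
    unfolding deficit by (simp add: algebra_simps)
  with deficit bracket \<open>\<R> > 0\<close> \<open>\<sigma> > 0\<close> \<open>R' > 0\<close>
  have "1 - \<R> * S > 0 \<and> \<R> * \<gamma>' * \<sigma> * (1 - S) - (\<gamma>' + \<mu>) * (1 - \<R> * S) > 0"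
    by (simp del: times_divide_eq_left times_divide_eq_right)
  then show ?thesis unfolding \<R>_def .
qed

theorem lemma3p4:
  fixes \<mu> \<beta>1 \<beta>2 \<gamma>1 \<gamma>2 \<sigma>12 \<sigma>21 :: real
    and S I1 I2 J1 J2 R1 R2 R3 :: real
  assumes "\<mu> > 0" "\<beta>1 > 0" "\<beta>2 > 0" "\<gamma>1 > 0" "\<gamma>2 > 0"
    and "0 < \<sigma>21" "\<sigma>21 \<le> \<sigma>12" "\<sigma>12 \<le> 1"
    and "(\<beta>1 / (\<gamma>1 + \<mu>), \<beta>2 / (\<gamma>2 + \<mu>)) \<in> Omega \<mu> \<gamma>1 \<gamma>2 \<sigma>12 \<sigma>21"
    and "steady_state_M \<mu> \<beta>1 \<beta>2 \<gamma>1 \<gamma>2 \<sigma>12 \<sigma>21 S I1 I2 J1 J2 R1 R2 R3"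
    and "feasible_M S I1 I2 J1 J2 R1 R2 R3"
    and "I1 > 0" "I2 > 0"
  shows "1 - \<beta>1 / (\<gamma>1 + \<mu>) * S > 0 \<and> 1 - \<beta>2 / (\<gamma>2 + \<mu>) * S > 0 \<and>
         \<beta>1 / (\<gamma>1 + \<mu>) * \<gamma>2 * \<sigma>21 * (1 - S) - (\<gamma>2 + \<mu>) * (1 - \<beta>1 / (\<gamma>1 + \<mu>) * S) > 0 \<and>
         \<beta>2 / (\<gamma>2 + \<mu>) * \<gamma>1 * \<sigma>12 * (1 - S) - (\<gamma>1 + \<mu>) * (1 - \<beta>2 / (\<gamma>2 + \<mu>) * S) > 0"
proof -
  note steady = assms(10)[unfolded steady_state_M_def]
  note feasible = assms(11)[unfolded feasible_M_def]
  have "\<sigma>12 > 0" using assms(6,7) by linarith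
  have strain1: "1 - \<beta>1 / (\<gamma>1 + \<mu>) * S > 0 \<and>
      \<beta>1 / (\<gamma>1 + \<mu>) * \<gamma>2 * \<sigma>21 * (1 - S) - (\<gamma>2 + \<mu>) * (1 - \<beta>1 / (\<gamma>1 + \<mu>) * S) > 0"
    using steady feasible assms(1,2,4-6,12,13)
    by (intro strain_threshold_inequalities[where \<beta> = \<beta>1 and \<gamma> = \<gamma>1 and \<gamma>' = \<gamma>2 and \<sigma> = \<sigma>21
        and I = I1 and J = J1 and I' = I2 and R' = R2]) auto
  have strain2: "1 - \<beta>2 / (\<gamma>2 + \<mu>) * S > 0 \<and>
      \<beta>2 / (\<gamma>2 + \<mu>) * \<gamma>1 * \<sigma>12 * (1 - S) - (\<gamma>1 + \<mu>) * (1 - \<beta>2 / (\<gamma>2 + \<mu>) * S) > 0"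
    using steady feasible assms(1,3-5,12,13) \<open>\<sigma>12 > 0\<close>
    by (intro strain_threshold_inequalities[where \<beta> = \<beta>2 and \<gamma> = \<gamma>2 and \<gamma>' = \<gamma>1 and \<sigma> = \<sigma>12
        and I = I2 and J = J2 and I' = I1 and R' = R1]) auto
  show ?thesis using strain1 strain2 by blast
qed

end
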